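(* Let $p\in(1,\infty)$ and let $X$ be an asymptotically $p$-uniformly smooth Banach space. There exists $c>0$ such that for all $x,y\in X$, all $\delta>0$ and every weakly null sequence $(x_n)$ in $B_X$, there is $n_0\in\mathbb N$ such that for all $n>n_0$, $u+\delta^{1/p}\|v\|x_n\in\mathrm{Mid}(x,y,c\delta)$, where $u=\frac12(x+y)$ and $v=\frac12(x-y)$.
   Context: $X$ is asymptotically $p$-uniformly smooth if $\overline\rho_X(t)\le Ct^p$ for $t\in[0,1]$ and some $C>0$, where $\overline{\rho}_X(t)=\sup_{x\in\partial B_X}\inf_{\dim(X/E)<\infty}\sup_{h\in\partial B_E}\|x+th\|-1$. For $x,y\in X$ and $\delta>0$, $\mathrm{Mid}(x,y,\delta)=\{z\in X:\max\{\|x-z\|,\|y-z\|\}\le\frac12(1+\delta)\|x-y\|\}$. *)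

theory Defs
  imports "HOL-Analysis.Analysis"
begin

definition finite_codim :: "'a::real_normed_vector set \<Rightarrow> bool" where
  "finite_codim E \<longleftrightarrow> subspace E \<and> closed E \<and>
     (\<exists>F. finite F \<and> span (E \<union> F) = UNIV)"

text \<open>Modulus of asymptotic uniform smoothness, valued in the extended reals
  (the supremum over an empty unit sphere is -\<infinity>).\<close>
definition asym_smooth_mod :: "'a::real_normed_vector itself \<Rightarrow> real \<Rightarrow> ereal" where
  "asym_smooth_mod _ t =
     (SUP x\<in>{x::'a. norm x = 1}. INF E\<in>{E. finite_codim E}.
        SUP h\<in>{h\<in>E. norm h = 1}. ereal (norm (x + t *\<^sub>R h) - 1))"

definition asymptotically_p_uniformly_smooth :: "'a::real_normed_vector itself \<Rightarrow> real \<Rightarrow> bool" where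
  "asymptotically_p_uniformly_smooth T p \<longleftrightarrow>
     (\<exists>C>0. \<forall>t\<in>{0..1}. asym_smooth_mod T t \<le> ereal (C * t powr p))"

definition weakly_null :: "(nat \<Rightarrow> 'a::real_normed_vector) \<Rightarrow> bool" where
  "weakly_null xs \<longleftrightarrow>
     (\<forall>f::'a \<Rightarrow> real. bounded_linear f \<longrightarrow> (\<lambda>n. f (xs n)) \<longlonglongrightarrow> 0)"

definition Mid :: "'a::real_normed_vector \<Rightarrow> 'a \<Rightarrow> real \<Rightarrow> 'a set" where
  "Mid x y \<delta> = {z. max (norm (x - z)) (norm (y - z)) \<le> (1/2) * (1 + \<delta>) * norm (x - y)}"

end

theory Submission imports Defs begin

text \<open>With v = (x - y)/2 and z = (x + y)/2 + s x_n one has x - z = v - s x_n and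
  y - z = -(v + s x_n), so it suffices to bound \<parallel>v \<plusminus> t\<parallel>v\<parallel> x_n\<parallel> for t = \<delta>^(1/p).
  Asymptotic smoothness at v/\<parallel>v\<parallel> gives a closed subspace E of finite codimension on whose
  unit sphere, hence by convexity on whose unit ball, \<parallel>v/\<parallel>v\<parallel> + t h\<parallel> \<le> 1 + 2C\<delta>. A weakly
  null sequence in the unit ball eventually lies arbitrarily close to the unit ball of E:
  the finitely many complementary directions are removed one at a time by bounded coordinate
  functionals, which tend to 0 along the sequence. For \<delta> \<ge> 1 the triangle inequality suffices.\<close>

lemma span_insert_subspace:
  assumes "subspace H"
  shows "span (insert g H) = {x. \<exists>k. x - k *\<^sub>R g \<in> H}"
proof -
  have "span H = H" using assms by simp
  then show ?thesis by (simp only: span_insert)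
qed

lemma closed_subspace_norm_add_scaleR_ge:
  fixes g :: "'a::real_normed_vector"
  assumes "subspace H" "closed H" "g \<notin> H"
  obtains d where "d > 0" "\<And>h k. h \<in> H \<Longrightarrow> \<bar>k\<bar> * d \<le> norm (h + k *\<^sub>R g)"
proof
  have "H \<noteq> {}" using subspace_0[OF assms(1)] by auto
  then show "infdist g H > 0" using infdist_pos_not_in_closed assms(2,3) by blast
  fix h k assume "h \<in> H"
  show "\<bar>k\<bar> * infdist g H \<le> norm (h + k *\<^sub>R g)"
  proof (cases "k = 0")
    case False
    have "- ((1/k) *\<^sub>R h) \<in> H" using \<open>h \<in> H\<close> assms(1) by (simp add: subspace_neg subspace_scale)
    then have "infdist g H \<le> dist g (- ((1/k) *\<^sub>R h))" by (rule infdist_le)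
    also have "\<dots> = norm ((1/k) *\<^sub>R h + g)" by (simp add: dist_norm add.commute)
    finally
    have "\<bar>k\<bar> * infdist g H \<le> norm (k *\<^sub>R ((1/k) *\<^sub>R h + g))"
      by (simp add: mult_left_mono)
    also have "k *\<^sub>R ((1/k) *\<^sub>R h + g) = h + k *\<^sub>R g" using False by (simp add: scaleR_add_right)
    finally show ?thesis .
  qed simp
qed

lemma closed_span_insert_closed_subspace:
  fixes g :: "'a::real_normed_vector"
  assumes "subspace H" "closed H"
  shows "closed (span (insert g H))"
proof (cases "g \<in> H")
  case True
  then have "span (insert g H) = span H" by (simp add: span_redundant span_base)
  also have "\<dots> = H" using assms(1) by simp
  finally show ?thesis using assms(2) by simp
next
  case False
  obtain d where d: "d > 0" "\<And>h k. h \<in> H \<Longrightarrow> \<bar>k\<bar> * d \<le> norm (h + k *\<^sub>R g)"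
    using closed_subspace_norm_add_scaleR_ge[OF assms False] by blast
  show ?thesis
    unfolding closed_sequential_limits span_insert_subspace[OF assms(1)]
  proof (intro allI impI, elim conjE)
    fix z l assume "\<forall>n. z n \<in> {x. \<exists>k. x - k *\<^sub>R g \<in> H}" and zl: "z \<longlonglongrightarrow> l"
    then have "\<forall>n. \<exists>k. z n - k *\<^sub>R g \<in> H" by simp
    then obtain k where kH: "\<And>n. z n - k n *\<^sub>R g \<in> H" by (auto simp: choice_iff)
    \<comment> \<open>The coefficients along g are controlled by the distances, so they converge with z.\<close>
    have k_dist: "\<bar>k m - k j\<bar> * d \<le> dist (z m) (z j)" for m j
    proof -
      have "(z m - k m *\<^sub>R g) - (z j - k j *\<^sub>R g) \<in> H" using kH assms(1) by (simp add: subspace_diff)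
      from d(2)[OF this, of "k m - k j"] show ?thesis by (simp add: dist_norm algebra_simps)
    qed
    have "Cauchy k"
    proof (rule metric_CauchyI)
      fix e :: real assume "e > 0"
      then obtain M where M: "\<forall>m\<ge>M. \<forall>n\<ge>M. dist (z m) (z n) < e * d"
        using metric_CauchyD[OF LIMSEQ_imp_Cauchy[OF zl], of "e * d"] d(1) by auto
      have "dist (k m) (k n) < e" if "M \<le> m" "M \<le> n" for m n
      proof -
        have "\<bar>k m - k n\<bar> * d < e * d" using M k_dist[of m n] that by fastforce
        then show ?thesis using d(1) by (simp add: dist_real_def)
      qed
      then show "\<exists>M. \<forall>m\<ge>M. \<forall>n\<ge>M. dist (k m) (k n) < e" by blast
    qed
    then obtain K where "k \<longlonglongrightarrow> K" using Cauchy_convergent_iff convergent_def by blast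
    then have "(\<lambda>n. z n - k n *\<^sub>R g) \<longlonglongrightarrow> l - K *\<^sub>R g" by (intro tendsto_intros zl)
    then have "l - K *\<^sub>R g \<in> H" by (rule closed_sequentially[OF assms(2) kH])
    then show "l \<in> {x. \<exists>k. x - k *\<^sub>R g \<in> H}" by blast
  qed
qed

lemma closed_span_Un_finite:
  fixes E :: "'a::real_normed_vector set"
  assumes "finite F" "subspace E" "closed E"
  shows "closed (span (E \<union> F))"
  using assms(1)
proof induct
  case empty
  have "span E = E" using assms(2) by simp
  then show ?case using assms(3) by (simp only: Un_empty_right)
next
  case (insert g F)
  have "span (E \<union> insert g F) = span (insert g (span (E \<union> F)))"
    by (simp add: span_insert span_span)
  then show ?case using closed_span_insert_closed_subspace[OF subspace_span insert(3)] by simp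
qed

text \<open>The coefficient of g in the decomposition X = H \<oplus> \<real>g; a junk value unless g \<notin> H
  and z \<in> span (insert g H).\<close>
definition coord :: "'a::real_normed_vector set \<Rightarrow> 'a \<Rightarrow> 'a \<Rightarrow> real" where
  "coord H g z = (THE k. z - k *\<^sub>R g \<in> H)"

lemma coord_eq:
  assumes "subspace H" "g \<notin> H" "z - k *\<^sub>R g \<in> H"
  shows "coord H g z = k"
  unfolding coord_def
proof (rule the_equality[where P = "\<lambda>k. z - k *\<^sub>R g \<in> H", OF assms(3)])
  fix k' assume k': "z - k' *\<^sub>R g \<in> H"
  have "(k - k') *\<^sub>R g \<in> H"
    using subspace_diff[OF assms(1) k' assms(3)] by (simp add: algebra_simps)
  show "k' = k"
  proof (rule ccontr)
    assume "k' \<noteq> k"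
    then have "g = (1 / (k - k')) *\<^sub>R ((k - k') *\<^sub>R g)" by simp
    then show False using subspace_scale[OF assms(1) \<open>(k - k') *\<^sub>R g \<in> H\<close>] assms(2) by metis
  qed
qed

lemma coord_mem:
  assumes "subspace H" "g \<notin> H" "span (insert g H) = UNIV"
  shows "z - coord H g z *\<^sub>R g \<in> H"
proof -
  obtain k where "z - k *\<^sub>R g \<in> H" using assms(3) span_insert_subspace[OF assms(1)] by blast
  then show ?thesis using coord_eq[OF assms(1,2)] by simp
qed

lemma bounded_linear_coord:
  assumes "subspace H" "closed H" "g \<notin> H" "span (insert g H) = UNIV"
  shows "bounded_linear (coord H g)"
proof -
  obtain d where d: "d > 0" "\<And>h k. h \<in> H \<Longrightarrow> \<bar>k\<bar> * d \<le> norm (h + k *\<^sub>R g)"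
    using closed_subspace_norm_add_scaleR_ge[OF assms(1-3)] by blast
  note mem = coord_mem[OF assms(1,3,4)] and eq = coord_eq[OF assms(1,3)]
  show ?thesis
  proof (rule bounded_linear_intro)
    fix x y
    have "(x - coord H g x *\<^sub>R g) + (y - coord H g y *\<^sub>R g) \<in> H" using mem assms(1) by (simp add: subspace_add)
    then show "coord H g (x + y) = coord H g x + coord H g y" by (intro eq) (simp add: algebra_simps)
  next
    fix r x
    have "r *\<^sub>R (x - coord H g x *\<^sub>R g) \<in> H" using mem assms(1) by (simp add: subspace_scale)
    then show "coord H g (r *\<^sub>R x) = r *\<^sub>R coord H g x" by (simp add: eq algebra_simps)
  next
    fix x
    have "\<bar>coord H g x\<bar> * d \<le> norm x" using d(2)[OF mem[of x], of "coord H g x"] by simp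
    then show "norm (coord H g x) \<le> norm x * (1/d)" using d(1) by (simp add: field_simps)
  qed
qed

lemma subspace_dist_le_functional:
  fixes \<phi> :: "'a::real_normed_vector \<Rightarrow> real"
  assumes "subspace E" "linear \<phi>" "\<And>e. e \<in> E \<Longrightarrow> \<phi> e = 0" "\<phi> g = 1"
    "\<And>z. \<bar>\<phi> z\<bar> \<le> norm z * B" "e1 \<in> span (insert g E)"
  obtains e where "e \<in> E" "dist x e \<le> (1 + B * norm g) * dist x e1 + \<bar>\<phi> x\<bar> * norm g"
proof
  obtain k where k: "e1 - k *\<^sub>R g \<in> E" using assms(6) span_insert_subspace[OF assms(1)] by blast
  have "\<phi> e1 = k" using assms(3)[OF k] assms(4) linear_diff[OF assms(2)] linear_scale[OF assms(2)] by simp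
  with k show "e1 - \<phi> e1 *\<^sub>R g \<in> E" by simp
  have "\<phi> e1 = \<phi> x - \<phi> (x - e1)" by (simp add: linear_diff[OF assms(2)])
  then have "\<bar>\<phi> e1\<bar> \<le> \<bar>\<phi> x\<bar> + norm (x - e1) * B"
    using abs_triangle_ineq4[of "\<phi> x" "\<phi> (x - e1)"] assms(5)[of "x - e1"] by linarith
  then have "\<bar>\<phi> e1\<bar> * norm g \<le> \<bar>\<phi> x\<bar> * norm g + B * norm g * dist x e1"
    by (metis distrib_right dist_norm mult.commute mult.left_commute mult_right_mono norm_ge_zero)
  moreover have "dist x (e1 - \<phi> e1 *\<^sub>R g) \<le> dist x e1 + \<bar>\<phi> e1\<bar> * norm g"
    using norm_triangle_ineq[of "x - e1" "\<phi> e1 *\<^sub>R g"] by (simp add: dist_norm algebra_simps)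
  ultimately show "dist x (e1 - \<phi> e1 *\<^sub>R g) \<le> (1 + B * norm g) * dist x e1 + \<bar>\<phi> x\<bar> * norm g"
    by (simp add: algebra_simps)
qed

lemma eventually_near_subspace_of_functional:
  fixes \<phi> :: "'a::real_normed_vector \<Rightarrow> real"
  assumes "subspace E" "bounded_linear \<phi>" "\<And>e. e \<in> E \<Longrightarrow> \<phi> e = 0" "\<phi> g = 1"
    and "(\<lambda>n. \<phi> (xs n)) \<longlonglongrightarrow> 0"
    and "\<forall>\<epsilon>>0. \<forall>\<^sub>F n in sequentially. \<exists>e\<in>span (insert g E). dist (xs n) e < \<epsilon>"
  shows "\<forall>\<epsilon>>0. \<forall>\<^sub>F n in sequentially. \<exists>e\<in>E. dist (xs n) e < \<epsilon>"
proof (intro allI impI)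
  fix \<epsilon> :: real assume "\<epsilon> > 0"
  obtain B where B: "B > 0" "\<And>z. norm (\<phi> z) \<le> norm z * B"
    using bounded_linear.pos_bounded[OF assms(2)] by blast
  define M where "M = 1 + B * norm g + norm g"
  have "M > 0" using B(1) by (simp add: M_def add_pos_nonneg)
  define \<eta> where "\<eta> = \<epsilon> / M"
  have "\<eta> > 0" "\<eta> * M = \<epsilon>" using \<open>M > 0\<close> \<open>\<epsilon> > 0\<close> by (simp_all add: \<eta>_def)
  have "\<forall>\<^sub>F n in sequentially. \<exists>e1\<in>span (insert g E). dist (xs n) e1 < \<eta>"
    using assms(6) \<open>\<eta> > 0\<close> by blast
  moreover have "\<forall>\<^sub>F n in sequentially. \<bar>\<phi> (xs n)\<bar> < \<eta>"
    using tendstoD[OF assms(5) \<open>\<eta> > 0\<close>] by (simp add: dist_real_def)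
  ultimately show "\<forall>\<^sub>F n in sequentially. \<exists>e\<in>E. dist (xs n) e < \<epsilon>"
  proof eventually_elim
    case (elim n)
    from elim(1) obtain e1 where e1: "e1 \<in> span (insert g E)" "dist (xs n) e1 < \<eta>" by blast
    obtain e where "e \<in> E" and e: "dist (xs n) e \<le> (1 + B * norm g) * dist (xs n) e1 + \<bar>\<phi> (xs n)\<bar> * norm g"
      using subspace_dist_le_functional[OF assms(1) bounded_linear.linear[OF assms(2)] assms(3,4) _ e1(1)] B(2)
      by (metis real_norm_def)
    have "(1 + B * norm g) * dist (xs n) e1 < (1 + B * norm g) * \<eta>"
      using e1(2) B(1) by (intro mult_strict_left_mono) (auto intro: add_pos_nonneg)
    moreover have "\<bar>\<phi> (xs n)\<bar> * norm g \<le> \<eta> * norm g"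
      using elim(2) by (intro mult_right_mono) auto
    moreover have "(1 + B * norm g) * \<eta> + \<eta> * norm g = \<eta> * M"
      by (simp add: M_def algebra_simps)
    ultimately show ?case using e \<open>e \<in> E\<close> \<open>\<eta> * M = \<epsilon>\<close> by (intro bexI[of _ e]) linarith+
  qed
qed

lemma weakly_null_eventually_near_subspace:
  fixes E :: "'a::real_normed_vector set"
  assumes "finite F" "subspace E" "closed E" "span (E \<union> F) = UNIV" "weakly_null xs"
  shows "\<forall>\<epsilon>>0. \<forall>\<^sub>F n in sequentially. \<exists>e\<in>E. dist (xs n) e < \<epsilon>"
  using assms
proof (induct F arbitrary: E)
  case empty
  then have "E = UNIV" by (simp add: span_eq_iff[THEN iffD2])
  then have "\<exists>e\<in>E. dist (xs n) e < \<epsilon>" if "\<epsilon> > 0" for n \<epsilon>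
    using that by (intro bexI[of _ "xs n"]) auto
  then show ?case by (simp add: always_eventually)
next
  case (insert g F E)
  show ?case
  proof (cases "g \<in> span (E \<union> F)")
    case True
    then have "span (E \<union> F) = UNIV" using insert(6) span_redundant[OF True] by simp
    then show ?thesis using insert by blast
  next
    case False
    \<comment> \<open>Enlarge E by g (induction hypothesis), then remove the g-component with the
      coordinate of g relative to span (E \<union> F), which vanishes on E and tends to 0 along xs.\<close>
    define H where "H = span (E \<union> F)"
    have H: "subspace H" "closed H" "g \<notin> H" "span (insert g H) = UNIV"
      using False closed_span_Un_finite[OF insert(1,4,5)] insert(6)
      by (simp_all add: H_def span_insert span_span)
    have "E \<subseteq> H" unfolding H_def using span_superset by blast
    have \<phi>: "bounded_linear (coord H g)" by (rule bounded_linear_coord[OF H])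
    have "closed (span (insert g E))"
      using closed_span_insert_closed_subspace[OF insert(4,5), of g] insert(4) by simp
    moreover have "span (span (insert g E) \<union> F) = UNIV"
    proof -
      have "E \<union> insert g F \<subseteq> span (insert g E) \<union> F" using span_superset by blast
      then show ?thesis using span_mono insert(6) by blast
    qed
    ultimately have "\<forall>\<epsilon>>0. \<forall>\<^sub>F n in sequentially. \<exists>e\<in>span (insert g E). dist (xs n) e < \<epsilon>"
      using insert(3)[OF subspace_span _ _ insert(7)] by blast
    moreover have "coord H g e = 0" if "e \<in> E" for e
      using coord_eq[OF H(1,3), of e 0] that \<open>E \<subseteq> H\<close> by auto
    moreover have "coord H g g = 1" using coord_eq[OF H(1,3), of g 1] subspace_0[OF H(1)] by simp
    moreover have "(\<lambda>n. coord H g (xs n)) \<longlonglongrightarrow> 0"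
      using insert(7) \<phi> unfolding weakly_null_def by blast
    ultimately show ?thesis using eventually_near_subspace_of_functional[OF insert(4) \<phi>] by blast
  qed
qed

lemma weakly_null_uminus:
  fixes xs :: "nat \<Rightarrow> 'a::real_normed_vector"
  assumes "weakly_null xs"
  shows "weakly_null (\<lambda>n. - xs n)"
  unfolding weakly_null_def
proof (intro allI impI)
  fix f :: "'a \<Rightarrow> real" assume "bounded_linear f"
  then have "(\<lambda>n. - f (xs n)) \<longlonglongrightarrow> - 0"
    using assms unfolding weakly_null_def by (intro tendsto_minus) blast
  then show "(\<lambda>n. f (- xs n)) \<longlonglongrightarrow> 0" using \<open>bounded_linear f\<close> by (simp add: linear_neg bounded_linear.linear)
qed

lemma norm_add_scaleR_le_on_unit_ball:
  fixes w :: "'a::real_normed_vector"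
  assumes "subspace E" "\<And>h. h \<in> E \<Longrightarrow> norm h = 1 \<Longrightarrow> norm (w + t *\<^sub>R h) \<le> K"
    and "norm w \<le> K" "h \<in> E" "norm h \<le> 1"
  shows "norm (w + t *\<^sub>R h) \<le> K"
proof (cases "h = 0")
  case False
  define a where "a = norm h"
  have a: "0 < a" "a \<le> 1" using False assms(5) by (auto simp: a_def)
  define u where "u = (1/a) *\<^sub>R h"
  have u: "u \<in> E" "- u \<in> E" "norm u = 1" "norm (- u) = 1"
    using assms(1,4) False by (auto simp: u_def a_def subspace_scale subspace_neg)
  have "w + t *\<^sub>R h = ((1+a)/2) *\<^sub>R (w + t *\<^sub>R u) + ((1-a)/2) *\<^sub>R (w + t *\<^sub>R (- u))"
  proof -
    have "((1+a)/2) *\<^sub>R (w + t *\<^sub>R u) + ((1-a)/2) *\<^sub>R (w + t *\<^sub>R (- u))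
        = ((1+a)/2 + (1-a)/2) *\<^sub>R w + (t * ((1+a)/2) - t * ((1-a)/2)) *\<^sub>R u"
      by (simp add: algebra_simps)
    also have "(1+a)/2 + (1-a)/2 = (1::real)" by (simp add: field_simps)
    also have "t * ((1+a)/2) - t * ((1-a)/2) = t * a" by (simp add: field_simps)
    finally show ?thesis using a by (simp add: u_def)
  qed
  also have "norm \<dots> \<le> ((1+a)/2) * norm (w + t *\<^sub>R u) + ((1-a)/2) * norm (w + t *\<^sub>R (- u))"
    by (rule order_trans[OF norm_triangle_ineq]) (use a in simp)
  also have "\<dots> \<le> ((1+a)/2) * K + ((1-a)/2) * K"
    using assms(2)[OF u(1,3)] assms(2)[OF u(2,4)] a by (intro add_mono mult_left_mono) auto
  also have "\<dots> = K" by (simp add: field_simps)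
  finally show ?thesis .
qed (use assms(3) in simp)

lemma subspace_approx_in_unit_ball:
  fixes x :: "'a::real_normed_vector"
  assumes "subspace E" "norm x \<le> 1" "e \<in> E" "dist x e < \<epsilon>"
  obtains e' where "e' \<in> E" "norm e' \<le> 1" "dist x e' < 2 * \<epsilon>"
proof (cases "norm e \<le> 1")
  case True
  have "dist x e < 2 * \<epsilon>" using assms(4) zero_le_dist[of x e] by linarith
  then show ?thesis using that True assms(3) by blast
next
  case False
  define e' where "e' = (1 / norm e) *\<^sub>R e"
  have "e' \<in> E" "norm e' = 1" using assms(1,3) False by (auto simp: e'_def subspace_scale)
  have "e - e' = (1 - 1 / norm e) *\<^sub>R e" by (simp add: e'_def algebra_simps)
  moreover have "0 \<le> 1 - 1 / norm e" using False by (simp add: divide_le_eq_1)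
  ultimately have "norm (e - e') = (1 - 1 / norm e) * norm e" by simp
  also have "\<dots> = norm e - 1" using False by (auto simp: field_simps)
  also have "\<dots> \<le> dist x e" using assms(2) norm_triangle_ineq3[of e x] by (simp add: dist_norm norm_minus_commute)
  finally have "dist x e' < 2 * \<epsilon>" using dist_triangle[of x e' e] assms(4) by (simp add: dist_norm)
  then show ?thesis using that \<open>e' \<in> E\<close> \<open>norm e' = 1\<close> by simp
qed

lemma asym_smooth_mod_lessE:
  fixes w :: "'a::real_normed_vector"
  assumes "asym_smooth_mod TYPE('a) t < ereal r" "norm w = 1"
  obtains E where "finite_codim E" "\<And>h. h \<in> E \<Longrightarrow> norm h = 1 \<Longrightarrow> norm (w + t *\<^sub>R h) < 1 + r"
proof -
  have "(INF E\<in>{E. finite_codim E}. SUP h\<in>{h\<in>E. norm h = 1}. ereal (norm (w + t *\<^sub>R h) - 1))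
      \<le> asym_smooth_mod TYPE('a) t"
    unfolding asym_smooth_mod_def by (rule SUP_upper) (use assms(2) in simp)
  then have "(INF E\<in>{E. finite_codim E}. SUP h\<in>{h\<in>E. norm h = 1}. ereal (norm (w + t *\<^sub>R h) - 1))
      < ereal r" using assms(1) by (rule order_le_less_trans)
  then obtain E where E: "finite_codim E"
    "(SUP h\<in>{h\<in>E. norm h = 1}. ereal (norm (w + t *\<^sub>R h) - 1)) < ereal r"
    unfolding INF_less_iff by auto
  have "norm (w + t *\<^sub>R h) < 1 + r" if "h \<in> E" "norm h = 1" for h
  proof -
    have "ereal (norm (w + t *\<^sub>R h) - 1) \<le> (SUP h\<in>{h\<in>E. norm h = 1}. ereal (norm (w + t *\<^sub>R h) - 1))"
      by (rule SUP_upper) (use that in simp)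
    then have "ereal (norm (w + t *\<^sub>R h) - 1) < ereal r" using E(2) by (rule order_le_less_trans)
    then show ?thesis by simp
  qed
  then show ?thesis using that E(1) by blast
qed

lemma eventually_norm_add_scaleR_weakly_null_le:
  fixes w :: "'a::real_normed_vector"
  assumes "asym_smooth_mod TYPE('a) t < ereal r" "0 \<le> r" "0 \<le> t" "t \<le> 1" "norm w = 1"
    and "weakly_null xs" "\<forall>n. norm (xs n) \<le> 1" "\<epsilon> > 0"
  shows "\<forall>\<^sub>F n in sequentially. norm (w + t *\<^sub>R xs n) \<le> 1 + r + 2 * \<epsilon>"
proof -
  obtain E where "finite_codim E" and sphere_less: "\<And>h. h \<in> E \<Longrightarrow> norm h = 1 \<Longrightarrow> norm (w + t *\<^sub>R h) < 1 + r"
    using asym_smooth_mod_lessE[OF assms(1,5)] by blast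
  have sphere: "norm (w + t *\<^sub>R h) \<le> 1 + r" if "h \<in> E" "norm h = 1" for h
    using sphere_less[OF that] by simp
  obtain F where "subspace E" "closed E" "finite F" "span (E \<union> F) = UNIV"
    using \<open>finite_codim E\<close> unfolding finite_codim_def by blast
  then have "\<forall>\<^sub>F n in sequentially. \<exists>e\<in>E. dist (xs n) e < \<epsilon>"
    using weakly_null_eventually_near_subspace[of F E xs] assms(6,8) by simp
  then show ?thesis
  proof eventually_elim
    case (elim n)
    then obtain e where "e \<in> E" "norm e \<le> 1" "dist (xs n) e < 2 * \<epsilon>"
      using subspace_approx_in_unit_ball[OF \<open>subspace E\<close> assms(7)[rule_format]] by blast
    have "norm (w + t *\<^sub>R e) \<le> 1 + r"
      using norm_add_scaleR_le_on_unit_ball[OF \<open>subspace E\<close> sphere] assms(2,5) \<open>e \<in> E\<close> \<open>norm e \<le> 1\<close> by simp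
    moreover have "norm (t *\<^sub>R (xs n - e)) \<le> 2 * \<epsilon>"
      using \<open>dist (xs n) e < 2 * \<epsilon>\<close> assms(3,4) mult_mono[of t 1 "norm (xs n - e)" "2 * \<epsilon>"]
      by (simp add: dist_norm)
    moreover have "norm (w + t *\<^sub>R xs n) \<le> norm (w + t *\<^sub>R e) + norm (t *\<^sub>R (xs n - e))"
      using norm_triangle_ineq[of "w + t *\<^sub>R e" "t *\<^sub>R (xs n - e)"] by (simp add: algebra_simps)
    ultimately show ?case by linarith
  qed
qed

lemma eventually_norm_add_scaleR_le_asymptotically_smooth:
  fixes v :: "'a::real_normed_vector"
  assumes "1 < p" "C > 0" "\<forall>t\<in>{0..1}. asym_smooth_mod TYPE('a) t \<le> ereal (C * t powr p)"
    and "\<delta> > 0" "weakly_null xs" "\<forall>n. norm (xs n) \<le> 1"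
  shows "\<forall>\<^sub>F n in sequentially.
           norm (v + (\<delta> powr (1/p) * norm v) *\<^sub>R xs n) \<le> (1 + (2 * C + 1) * \<delta>) * norm v"
proof -
  define t where "t = \<delta> powr (1/p)"
  have "t > 0" using assms(4) by (simp add: t_def)
  consider "v = 0" | "v \<noteq> 0" "1 \<le> \<delta>" | "v \<noteq> 0" "\<delta> < 1" by linarith
  then show ?thesis
  proof cases
    case 1
    then show ?thesis by simp
  next
    case 2
    have "t \<le> \<delta> powr 1" unfolding t_def using 2 assms(1) by (intro powr_mono) auto
    then have "t * norm (xs n) \<le> \<delta>" for n
      using assms(4,6) mult_mono[of t \<delta> "norm (xs n)" 1] by simp
    moreover have "\<delta> \<le> (2 * C + 1) * \<delta>" using assms(2,4) by (simp add: distrib_right)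
    ultimately have "t * norm (xs n) \<le> (2 * C + 1) * \<delta>" for n by (meson order_trans)
    then have "norm (v + (t * norm v) *\<^sub>R xs n) \<le> (1 + (2 * C + 1) * \<delta>) * norm v" for n
      using norm_triangle_ineq[of v "(t * norm v) *\<^sub>R xs n"] \<open>t > 0\<close>
        mult_right_mono[of "t * norm (xs n)" "(2 * C + 1) * \<delta>" "norm v"]
      by (simp add: algebra_simps)
    then show ?thesis by (simp add: t_def)
  next
    case 3
    have "t \<le> 1" using 3 assms(1,4) by (simp add: t_def powr_le1)
    have "t powr p = \<delta>" using assms(1,4) by (simp add: t_def powr_powr)
    moreover have "asym_smooth_mod TYPE('a) t \<le> ereal (C * t powr p)"
      using assms(3) \<open>t > 0\<close> \<open>t \<le> 1\<close> by simp
    ultimately have "asym_smooth_mod TYPE('a) t \<le> ereal (C * \<delta>)" by simp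
    also have "\<dots> < ereal (2 * C * \<delta>)" using assms(2,4) by simp
    finally have "asym_smooth_mod TYPE('a) t < ereal (2 * C * \<delta>)" .
    then have "\<forall>\<^sub>F n in sequentially. norm (sgn v + t *\<^sub>R xs n) \<le> 1 + 2 * C * \<delta> + \<delta>"
      using eventually_norm_add_scaleR_weakly_null_le[of t "2 * C * \<delta>" "sgn v" xs "\<delta> / 2"]
        assms(2,4,5,6) \<open>t > 0\<close> \<open>t \<le> 1\<close> 3(1) by (simp add: norm_sgn)
    then show ?thesis
    proof eventually_elim
      case (elim n)
      have "v + (t * norm v) *\<^sub>R xs n = norm v *\<^sub>R (sgn v + t *\<^sub>R xs n)"
        using 3(1) by (simp add: sgn_div_norm algebra_simps)
      then have "norm (v + (t * norm v) *\<^sub>R xs n) = norm v * norm (sgn v + t *\<^sub>R xs n)" by simp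
      also have "\<dots> \<le> norm v * (1 + 2 * C * \<delta> + \<delta>)" using elim by (simp add: mult_left_mono)
      also have "\<dots> = (1 + (2 * C + 1) * \<delta>) * norm v" by (simp add: algebra_simps)
      finally show ?case by (simp add: t_def)
    qed
  qed
qed

lemma midpoint_add_mem_Mid_iff:
  fixes x y z :: "'a::real_normed_vector"
  shows "(1/2) *\<^sub>R (x + y) + z \<in> Mid x y \<eta> \<longleftrightarrow>
    norm ((1/2) *\<^sub>R (x - y) - z) \<le> (1 + \<eta>) * norm ((1/2) *\<^sub>R (x - y)) \<and>
    norm ((1/2) *\<^sub>R (x - y) + z) \<le> (1 + \<eta>) * norm ((1/2) *\<^sub>R (x - y))"
proof -
  have dx: "x - ((1/2) *\<^sub>R (x + y) + z) = (1/2) *\<^sub>R (x - y) - z"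
    and dy: "y - ((1/2) *\<^sub>R (x + y) + z) = - ((1/2) *\<^sub>R (x - y) + z)"
    by (simp_all add: algebra_simps flip: scaleR_2)
  have r: "(1/2) * (1 + \<eta>) * norm (x - y) = (1 + \<eta>) * norm ((1/2) *\<^sub>R (x - y))" by simp
  show ?thesis unfolding Mid_def mem_Collect_eq dx dy norm_minus_cancel r max.bounded_iff ..
qed

theorem lemma5p1:
  fixes p :: real
  assumes "1 < p"
    and "asymptotically_p_uniformly_smooth TYPE('a::banach) p"
  shows "\<exists>c>0. \<forall>(x::'a) y \<delta> (xs::nat \<Rightarrow> 'a).
           \<delta> > 0 \<and> weakly_null xs \<and> (\<forall>n. norm (xs n) \<le> 1) \<longrightarrow>
           (\<exists>n0::nat. \<forall>n>n0.
              (1/2) *\<^sub>R (x + y) + (\<delta> powr (1/p) * norm ((1/2) *\<^sub>R (x - y))) *\<^sub>R xs n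
                \<in> Mid x y (c * \<delta>))"
proof -
  obtain C where C: "C > 0" "\<forall>t\<in>{0..1}. asym_smooth_mod TYPE('a) t \<le> ereal (C * t powr p)"
    using assms(2) unfolding asymptotically_p_uniformly_smooth_def by blast
  show ?thesis
  proof (intro exI[of _ "2 * C + 1"] conjI allI impI)
    fix x y :: 'a and \<delta> :: real and xs :: "nat \<Rightarrow> 'a"
    assume "\<delta> > 0 \<and> weakly_null xs \<and> (\<forall>n. norm (xs n) \<le> 1)"
    then have "\<delta> > 0" and xs: "weakly_null xs" "\<forall>n. norm (xs n) \<le> 1"
      and minus_xs: "weakly_null (\<lambda>n. - xs n)" "\<forall>n. norm (- xs n) \<le> 1"
      by (auto intro: weakly_null_uminus)
    note bound = eventually_norm_add_scaleR_le_asymptotically_smooth[OF assms(1) C \<open>\<delta> > 0\<close>,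
        where v = "(1/2) *\<^sub>R (x - y)"]
    have "\<forall>\<^sub>F n in sequentially.
        (1/2) *\<^sub>R (x + y) + (\<delta> powr (1/p) * norm ((1/2) *\<^sub>R (x - y))) *\<^sub>R xs n \<in> Mid x y ((2 * C + 1) * \<delta>)"
      using eventually_conj[OF bound[OF minus_xs] bound[OF xs]] by (simp add: midpoint_add_mem_Mid_iff)
    then show "\<exists>n0. \<forall>n>n0. (1/2) *\<^sub>R (x + y) + (\<delta> powr (1/p) * norm ((1/2) *\<^sub>R (x - y))) *\<^sub>R xs n
        \<in> Mid x y ((2 * C + 1) * \<delta>)"
      unfolding eventually_sequentially by (meson less_imp_le)
  qed (use C(1) in simp)
qed

end
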